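(* Let $\bm y=\bm X\bm\beta+\bm z$, where $\bm X=[\bm x_1,\dots,\bm x_p]\in\mathbb{R}^{n\times p}$ is deterministic of full column rank with unit-norm columns, $\bm\beta\in\mathbb{R}^p$, and $\bm z\sim N_n(\bm 0,\sigma^2\bm I_n)$. Fix $M\ge1$, and for each $j\in[p]$ let $\widetilde{\bm x}_j^{(1)},\dots,\widetilde{\bm x}_j^{(M)}\in\mathbb{R}^n$ be fixed vectors (not depending on $\bm z$) such that, for some constant $s_j$ and each $m\in[M]$: $\bm x_i^\top\widetilde{\bm x}_j^{(m)}=\bm x_i^\top\bm x_j$ for $i\ne j$; $\bm x_j^\top\widetilde{\bm x}_j^{(m)}=1-s_j$; $(\widetilde{\bm x}_j^{(m)})^\top\widetilde{\bm x}_j^{(m)}=1$; and $(\widetilde{\bm x}_j^{(m)})^\top\widetilde{\bm x}_j^{(\ell)}=1-s_j$ for $\ell\ne m$. Fix $\lambda\ge0$. Let $\widehat\beta_j^{(0)}$ be the coefficient of $\bm x_j$ in the ridge regression with penalty $\lambda$ (ordinary least squares if $\lambda=0$) of $\bm y$ onto $\bm X$, and for $m\in[M]$ let $\widehat\beta_j^{(m)}$ be the coefficient of $\widetilde{\bm x}_j^{(m)}$ in the ridge regression with the same penalty of $\bm y$ onto $\bm X$ with its $j$-th column replaced by $\widetilde{\bm x}_j^{(m)}$. Define $$p_j=\frac{1+\sum_{m=1}^M\mathbf{1}\{|\widehat\beta_j^{(m)}|\ge|\widehat\beta_j^{(0)}|\}}{M+1}.$$ Suppose that for each $j\in[p]$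 there are almost surely no ties among $\widehat\beta_j^{(0)},\widehat\beta_j^{(1)},\dots,\widehat\beta_j^{(M)}$. Then for every $j$ with $\beta_j=0$, $p_j$ is uniformly distributed on $\{\frac1{M+1},\frac2{M+1},\dots,1\}$. *)

theory Defs
  imports "HOL-Probability.Probability"
begin

text \<open>Vectors in R^n are functions nat => real, only indices < n matter.
  A design with p columns is a function cols :: nat => (nat => real), column k = cols k.\<close>

definition inner_n :: "nat \<Rightarrow> (nat \<Rightarrow> real) \<Rightarrow> (nat \<Rightarrow> real) \<Rightarrow> real" where
  "inner_n n u v = (\<Sum>i<n. u i * v i)"

definition full_column_rank :: "nat \<Rightarrow> nat \<Rightarrow> (nat \<Rightarrow> nat \<Rightarrow> real) \<Rightarrow> bool" where
  "full_column_rank n p cols \<longleftrightarrow>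
     (\<forall>c :: nat \<Rightarrow> real. (\<forall>i<n. (\<Sum>k<p. c k * cols k i) = 0) \<longrightarrow> (\<forall>k<p. c k = 0))"

definition ridge_obj :: "nat \<Rightarrow> nat \<Rightarrow> real \<Rightarrow> (nat \<Rightarrow> real) \<Rightarrow> (nat \<Rightarrow> nat \<Rightarrow> real) \<Rightarrow> (nat \<Rightarrow> real) \<Rightarrow> real" where
  "ridge_obj n p lam y cols b =
     (\<Sum>i<n. (y i - (\<Sum>k<p. b k * cols k i))\<^sup>2) + lam * (\<Sum>k<p. (b k)\<^sup>2)"

definition ridge_coef :: "nat \<Rightarrow> nat \<Rightarrow> real \<Rightarrow> (nat \<Rightarrow> real) \<Rightarrow> (nat \<Rightarrow> nat \<Rightarrow> real) \<Rightarrow> (nat \<Rightarrow> real)" where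
  "ridge_coef n p lam y cols =
     (THE b. (\<forall>k\<ge>p. b k = 0) \<and>
             (\<forall>b'. (\<forall>k\<ge>p. b' k = 0) \<longrightarrow> ridge_obj n p lam y cols b \<le> ridge_obj n p lam y cols b'))"

definition gauss_noise :: "nat \<Rightarrow> real \<Rightarrow> (nat \<Rightarrow> real) measure" where
  "gauss_noise n \<sigma> = PiM {..<n} (\<lambda>_. density lborel (normal_density 0 \<sigma>))"

definition response :: "nat \<Rightarrow> (nat \<Rightarrow> nat \<Rightarrow> real) \<Rightarrow> (nat \<Rightarrow> real) \<Rightarrow> (nat \<Rightarrow> real) \<Rightarrow> (nat \<Rightarrow> real)" where
  "response p cols \<beta> z = (\<lambda>i. (\<Sum>k<p. \<beta> k * cols k i) + z i)"

definition bhat :: "nat \<Rightarrow> nat \<Rightarrow> real \<Rightarrow> (nat \<Rightarrow> nat \<Rightarrow> real) \<Rightarrow> (nat \<Rightarrow> nat \<Rightarrow> nat \<Rightarrow> real)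
                     \<Rightarrow> (nat \<Rightarrow> real) \<Rightarrow> nat \<Rightarrow> nat \<Rightarrow> (nat \<Rightarrow> real) \<Rightarrow> real" where
  "bhat n p lam cols xt \<beta> j m z =
     (if m = 0 then ridge_coef n p lam (response p cols \<beta> z) cols j
      else ridge_coef n p lam (response p cols \<beta> z) (cols(j := xt j m)) j)"

definition pval :: "nat \<Rightarrow> nat \<Rightarrow> real \<Rightarrow> (nat \<Rightarrow> nat \<Rightarrow> real) \<Rightarrow> (nat \<Rightarrow> nat \<Rightarrow> nat \<Rightarrow> real)
                     \<Rightarrow> (nat \<Rightarrow> real) \<Rightarrow> nat \<Rightarrow> nat \<Rightarrow> (nat \<Rightarrow> real) \<Rightarrow> real" where
  "pval n p lam cols xt \<beta> M j z =
     (1 + real (card {m \<in> {1..M}. \<bar>bhat n p lam cols xt \<beta> j m z\<bar> \<ge> \<bar>bhat n p lam cols xt \<beta> j 0 z\<bar>}))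
       / (real M + 1)"

end

theory Submission
  imports Defs "Jordan_Normal_Form.Determinant" "HOL-Combinatorics.Transposition"
begin

text \<open>Fix \<open>m\<close> and let \<open>H\<close> be the Householder reflection of \<open>\<real>\<^sup>n\<close> along \<open>u = x j - xt j m\<close>.
  It preserves the law \<open>N(0, \<sigma>\<^sup>2 I\<^sub>n)\<close> of \<open>z\<close>, exchanges the inner products with \<open>x j\<close> and
  \<open>xt j m\<close>, and fixes the inner products with every vector orthogonal to \<open>u\<close>: the other columns,
  the other substitutes, and \<open>X \<beta>\<close> (because \<open>\<beta> j = 0\<close>). A ridge coefficient depends on the
  design and the response only through the Gram matrix, which all the modified designs share with
  \<open>X\<close>, and through \<open>X\<^sup>T y\<close>. Hence replacing \<open>z\<close> by \<open>H z\<close> exchanges the estimates with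
  indices \<open>0\<close> and \<open>m\<close> and fixes the others, so their absolute values are exchangeable under the
  transposition of \<open>0\<close> and \<open>m\<close>. Without ties exactly one index has any given rank, so all
  \<open>M + 1\<close> ranks of the original estimate are equally likely.

  The invariance of the Gaussian law under \<open>H\<close> reduces to that of Lebesgue measure, which follows
  by writing \<open>H\<close> as an affine change of one coordinate, a shear, and another affine change of
  that coordinate.\<close>

lemma inner_n_commute: "inner_n n u v = inner_n n v u"
  unfolding inner_n_def by (simp add: mult.commute)

lemma inner_n_diff_left: "inner_n n (\<lambda>i. u i - v i) w = inner_n n u w - inner_n n v w"
  unfolding inner_n_def by (simp add: algebra_simps sum_subtractf)

lemma inner_n_diff_right: "inner_n n w (\<lambda>i. u i - v i) = inner_n n w u - inner_n n w v"
  unfolding inner_n_def by (simp add: algebra_simps sum_subtractf)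

lemma inner_n_self_eq_0_iff: "inner_n n u u = 0 \<longleftrightarrow> (\<forall>i<n. u i = 0)"
  unfolding inner_n_def by (subst sum_nonneg_eq_0_iff) auto

section \<open>Lebesgue measure on finite products of the real line\<close>

abbreviation lborel_on :: "'i set \<Rightarrow> ('i \<Rightarrow> real) measure" where
  "lborel_on I \<equiv> PiM I (\<lambda>_. lborel)"

lemma restrict_lborel_on_point: "z \<in> space (lborel_on I) \<Longrightarrow> (\<lambda>i\<in>I. z i) = z"
  by (auto simp: space_PiM PiE_def extensional_def fun_eq_iff)

lemma measurable_update_affine[measurable]:
  assumes "a \<in> I" and [measurable]: "g \<in> borel_measurable (lborel_on I)"
  shows "(\<lambda>z. \<lambda>i\<in>I. if i = a then \<alpha> * z a + g z else z i) \<in> measurable (lborel_on I) (lborel_on I)"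
proof (rule measurable_restrict)
  fix i assume "i \<in> I"
  then show "(\<lambda>z. if i = a then \<alpha> * z a + g z else z i) \<in> measurable (lborel_on I) lborel"
    using assms(1) by (cases "i = a") simp_all
qed

lemma measurable_shear:
  assumes "a \<in> I"
  shows "(\<lambda>z. \<lambda>i\<in>I. if i \<in> J then z i + c i * z a else z i) \<in> measurable (lborel_on I) (lborel_on I)"
proof (rule measurable_restrict)
  fix i assume "i \<in> I"
  then show "(\<lambda>z. if i \<in> J then z i + c i * z a else z i) \<in> measurable (lborel_on I) lborel"
    using assms by (cases "i \<in> J") simp_all
qed

lemma nn_integral_lborel_affine:
  assumes f: "f \<in> borel_measurable borel" and \<alpha>: "\<alpha> \<noteq> 0"
  shows "(\<integral>\<^sup>+y. f (\<alpha> * y + c) \<partial>lborel) = ennreal (1 / \<bar>\<alpha>\<bar>) * (\<integral>\<^sup>+y. f y \<partial>lborel)"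
proof -
  have "ennreal (1 / \<bar>\<alpha>\<bar>) * (\<integral>\<^sup>+y. f y \<partial>lborel)
      = (ennreal (1 / \<bar>\<alpha>\<bar>) * ennreal \<bar>\<alpha>\<bar>) * (\<integral>\<^sup>+y. f (c + \<alpha> * y) \<partial>lborel)"
    using nn_integral_real_affine[OF f \<alpha>, of c] by (simp add: mult.assoc)
  also have "ennreal (1 / \<bar>\<alpha>\<bar>) * ennreal \<bar>\<alpha>\<bar> = 1"
    using \<alpha> by (simp add: ennreal_mult[symmetric])
  finally show ?thesis by (simp add: add.commute)
qed

text \<open>Fubini in the coordinate \<open>a\<close>, on which \<open>g\<close> does not depend, reduces this to the
  one-dimensional substitution \<open>y \<mapsto> \<alpha> y + g z\<close>.\<close>
lemma nn_integral_lborel_on_update_affine: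
  assumes I: "finite I" and a: "a \<in> I" and \<alpha>: "\<alpha> \<noteq> 0"
    and g[measurable]: "g \<in> borel_measurable (lborel_on I)"
    and g_indep: "\<And>z y. g (z(a := y)) = g z"
    and F[measurable]: "F \<in> borel_measurable (lborel_on I)"
  shows "(\<integral>\<^sup>+z. F (\<lambda>i\<in>I. if i = a then \<alpha> * z a + g z else z i) \<partial>lborel_on I)
         = ennreal (1 / \<bar>\<alpha>\<bar>) * (\<integral>\<^sup>+z. F z \<partial>lborel_on I)"
proof -
  interpret product_sigma_finite "\<lambda>_. lborel :: real measure" by standard
  define I' where "I' = I - {a}"
  have I_eq: "I = insert a I'" and I': "finite I'" "a \<notin> I'"
    using a I by (auto simp: I'_def)
  let ?T = "\<lambda>z. \<lambda>i\<in>I. if i = a then \<alpha> * z a + g z else z i"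
  have F_ins[measurable]: "F \<in> borel_measurable (lborel_on (insert a I'))"
    using F by (simp add: I_eq)
  have FT_ins: "(\<lambda>z. F (?T z)) \<in> borel_measurable (lborel_on (insert a I'))"
    using measurable_compose[OF measurable_update_affine[OF a g] F] by (simp add: I_eq)
  have slice[measurable]: "(\<lambda>y. F (x(a := y))) \<in> borel_measurable borel"
    if "x \<in> space (lborel_on I')" for x
  proof -
    have "(\<lambda>y. x(a := y)) \<in> measurable borel (lborel_on (insert a I'))"
      using that by (auto intro!: measurable_PiM_single' simp: space_PiM PiE_def extensional_def)
    then show ?thesis by measurable
  qed
  have "(\<integral>\<^sup>+z. F (?T z) \<partial>lborel_on I)
      = (\<integral>\<^sup>+x. (\<integral>\<^sup>+y. F (?T (x(a := y))) \<partial>lborel) \<partial>lborel_on I')"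
    using product_nn_integral_insert[OF I' FT_ins] by (simp add: I_eq)
  also have "\<dots> = (\<integral>\<^sup>+x. (\<integral>\<^sup>+y. F (x(a := \<alpha> * y + g x)) \<partial>lborel) \<partial>lborel_on I')"
  proof (intro nn_integral_cong)
    fix x y assume "x \<in> space (lborel_on I')"
    then have "?T (x(a := y)) = x(a := \<alpha> * y + g x)"
      using I' by (auto simp: I_eq g_indep space_PiM PiE_def extensional_def fun_eq_iff)
    then show "F (?T (x(a := y))) = F (x(a := \<alpha> * y + g x))" by simp
  qed
  also have "\<dots> = (\<integral>\<^sup>+x. ennreal (1 / \<bar>\<alpha>\<bar>) * (\<integral>\<^sup>+y. F (x(a := y)) \<partial>lborel) \<partial>lborel_on I')"
    by (intro nn_integral_cong nn_integral_lborel_affine[OF slice \<alpha>])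
  also have "\<dots> = ennreal (1 / \<bar>\<alpha>\<bar>) * (\<integral>\<^sup>+x. (\<integral>\<^sup>+y. F (x(a := y)) \<partial>lborel) \<partial>lborel_on I')"
  proof (rule nn_integral_cmult)
    have "(\<lambda>(x, y). F (x(a := y))) \<in> borel_measurable (lborel_on I' \<Otimes>\<^sub>M lborel)"
      using measurable_compose[OF measurable_add_dim F_ins] by (simp add: case_prod_beta')
    then show "(\<lambda>x. \<integral>\<^sup>+y. F (x(a := y)) \<partial>lborel) \<in> borel_measurable (lborel_on I')"
      by (rule lborel.borel_measurable_nn_integral)
  qed
  also have "(\<integral>\<^sup>+x. (\<integral>\<^sup>+y. F (x(a := y)) \<partial>lborel) \<partial>lborel_on I') = (\<integral>\<^sup>+z. F z \<partial>lborel_on I)"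
    using product_nn_integral_insert[OF I' F_ins] by (simp add: I_eq)
  finally show ?thesis .
qed

lemma nn_integral_lborel_on_shear:
  assumes I: "finite I" and a: "a \<in> I" and J: "J \<subseteq> I - {a}"
    and F: "F \<in> borel_measurable (lborel_on I)"
  shows "(\<integral>\<^sup>+z. F (\<lambda>i\<in>I. if i \<in> J then z i + c i * z a else z i) \<partial>lborel_on I)
         = (\<integral>\<^sup>+z. F z \<partial>lborel_on I)"
proof -
  have "finite J" using J I by (meson finite_Diff finite_subset)
  then show ?thesis using J F
  proof (induction J arbitrary: F)
    case empty
    show ?case by (intro nn_integral_cong) (simp add: restrict_lborel_on_point)
  next
    case (insert j J)
    note F[measurable] = insert.prems(2)
    have j: "j \<in> I" "j \<noteq> a" and J: "J \<subseteq> I - {a}" using insert.prems(1) by auto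
    have ca[measurable]: "(\<lambda>w. c j * w a) \<in> borel_measurable (lborel_on I)" using a by measurable
    \<comment> \<open>the shear of coordinate \<open>j\<close> alone is an affine update of \<open>j\<close> with slope 1\<close>
    let ?S = "\<lambda>w. \<lambda>i\<in>I. if i = j then 1 * w j + c j * w a else w i"
    have "(\<integral>\<^sup>+z. F (\<lambda>i\<in>I. if i \<in> insert j J then z i + c i * z a else z i) \<partial>lborel_on I)
        = (\<integral>\<^sup>+z. F (?S (\<lambda>i\<in>I. if i \<in> J then z i + c i * z a else z i)) \<partial>lborel_on I)"
      using j a J insert.hyps(2)
      by (intro nn_integral_cong arg_cong[where f = F]) (auto simp: fun_eq_iff)
    also have "\<dots> = (\<integral>\<^sup>+w. F (?S w) \<partial>lborel_on I)"
      using j a by (intro insert.IH J) measurable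
    also have "\<dots> = ennreal (1 / \<bar>1\<bar>) * (\<integral>\<^sup>+w. F w \<partial>lborel_on I)"
      by (rule nn_integral_lborel_on_update_affine[OF I j(1) _ ca _ F]) (use j in auto)
    also have "\<dots> = (\<integral>\<^sup>+w. F w \<partial>lborel_on I)" by simp
    finally show ?case .
  qed
qed

section \<open>Householder reflections preserve the Gaussian law\<close>

text \<open>For \<open>u = 0\<close> the division by \<open>inner_n n u u = 0\<close> yields \<open>0\<close>, so \<open>householder n 0\<close> is the identity
  on \<open>space (lborel_on {..<n})\<close>.\<close>
definition householder :: "nat \<Rightarrow> (nat \<Rightarrow> real) \<Rightarrow> (nat \<Rightarrow> real) \<Rightarrow> (nat \<Rightarrow> real)" where
  "householder n u z = (\<lambda>i\<in>{..<n}. z i - 2 * (inner_n n u z / inner_n n u u) * u i)"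

lemma measurable_householder[measurable]:
  "householder n u \<in> measurable (lborel_on {..<n}) (lborel_on {..<n})"
  unfolding householder_def inner_n_def by measurable

text \<open>Pick a coordinate \<open>a\<close> with \<open>u a \<noteq> 0\<close>: first replace \<open>z a\<close> by \<open>inner_n n u z\<close>, then shear the
  other coordinates by multiples of it, finally recover the new \<open>a\<close>-th coordinate from the others.\<close>
lemma householder_decomposition:
  fixes u :: "nat \<Rightarrow> real" and n a :: nat
  defines "I \<equiv> {..<n}"
  defines "T1 \<equiv> \<lambda>z. \<lambda>i\<in>I. if i = a then u a * z a + (\<Sum>i\<in>I - {a}. u i * z i) else z i"
    and "S \<equiv> \<lambda>w. \<lambda>i\<in>I. if i \<in> I - {a} then w i + (- 2 * u i / inner_n n u u) * w a else w i"
    and "T3 \<equiv> \<lambda>w. \<lambda>i\<in>I. if i = a then (-1 / u a) * w a + - (\<Sum>i\<in>I - {a}. u i * w i) / u a else w i"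
  assumes a: "a < n" and ua: "u a \<noteq> 0"
  shows "householder n u z = T3 (S (T1 z))"
proof -
  have aI: "a \<in> I" and fI: "finite I" using a by (auto simp: I_def)
  define N where "N = inner_n n u u"
  define t where "t = inner_n n u z"
  have t_split: "t = u a * z a + (\<Sum>i\<in>I - {a}. u i * z i)"
    unfolding t_def inner_n_def I_def[symmetric] by (rule sum.remove[OF fI aI])
  have N_split: "N = u a * u a + (\<Sum>i\<in>I - {a}. u i * u i)"
    unfolding N_def inner_n_def I_def[symmetric] by (rule sum.remove[OF fI aI])
  have "0 < u a * u a" using ua by (metis not_real_square_gt_zero)
  moreover have "0 \<le> (\<Sum>i\<in>I - {a}. u i * u i)" by (simp add: sum_nonneg)
  ultimately have N: "N \<noteq> 0" using N_split by linarith
  have S_T1: "S (T1 z) i = (if i = a then t else z i - 2 * (t / N) * u i)" if "i \<in> I" for i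
    using that aI by (simp add: S_def T1_def t_split N_def)
  have "(\<Sum>i\<in>I - {a}. u i * S (T1 z) i) = (\<Sum>i\<in>I - {a}. u i * z i - 2 * (t / N) * (u i * u i))"
    by (intro sum.cong refl) (auto simp: S_T1 algebra_simps)
  also have "\<dots> = (t - u a * z a) - 2 * (t / N) * (N - u a * u a)"
    by (simp add: sum_subtractf sum_distrib_left t_split N_split)
  then have "T3 (S (T1 z)) a = z a - 2 * (t / N) * u a"
    using aI ua N by (simp add: T3_def S_T1 field_simps)
  then show ?thesis
    using aI S_T1 by (auto simp: householder_def I_def[symmetric] T3_def fun_eq_iff t_def N_def)
qed

lemma nn_integral_lborel_on_householder:
  assumes F[measurable]: "F \<in> borel_measurable (lborel_on {..<n})"
  shows "(\<integral>\<^sup>+z. F (householder n u z) \<partial>lborel_on {..<n}) = (\<integral>\<^sup>+z. F z \<partial>lborel_on {..<n})"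
proof (cases "\<forall>i<n. u i = 0")
  case True
  then have "householder n u z = (\<lambda>i\<in>{..<n}. z i)" for z
    by (simp add: householder_def inner_n_def)
  then show ?thesis by (intro nn_integral_cong) (simp add: restrict_lborel_on_point)
next
  case False
  then obtain a where a: "a < n" and ua: "u a \<noteq> 0" by auto
  let ?I = "{..<n}"
  have aI: "a \<in> ?I" using a by simp
  define g1 where "g1 z = (\<Sum>i\<in>?I - {a}. u i * z i)" for z
  define g3 where "g3 w = - (\<Sum>i\<in>?I - {a}. u i * w i) / u a" for w
  define S where "S w = (\<lambda>i\<in>?I. if i \<in> ?I - {a} then w i + (- 2 * u i / inner_n n u u) * w a else w i)" for w
  define T3 where "T3 w = (\<lambda>i\<in>?I. if i = a then (-1 / u a) * w a + g3 w else w i)" for w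
  have [measurable]: "g1 \<in> borel_measurable (lborel_on ?I)" "g3 \<in> borel_measurable (lborel_on ?I)"
    unfolding g1_def g3_def by measurable
  have [measurable]: "S \<in> measurable (lborel_on ?I) (lborel_on ?I)"
    unfolding S_def[abs_def] using aI by (rule measurable_shear)
  have [measurable]: "T3 \<in> measurable (lborel_on ?I) (lborel_on ?I)"
    unfolding T3_def[abs_def] using aI by measurable
  have "householder n u z = T3 (S (\<lambda>i\<in>?I. if i = a then u a * z a + g1 z else z i))" for z
    unfolding g1_def g3_def S_def T3_def by (rule householder_decomposition[where u = u and a = a, OF a ua])
  then have "(\<integral>\<^sup>+z. F (householder n u z) \<partial>lborel_on ?I)
      = (\<integral>\<^sup>+z. F (T3 (S (\<lambda>i\<in>?I. if i = a then u a * z a + g1 z else z i))) \<partial>lborel_on ?I)"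
    by simp
  also have "\<dots> = ennreal (1 / \<bar>u a\<bar>) * (\<integral>\<^sup>+w. F (T3 (S w)) \<partial>lborel_on ?I)"
    by (rule nn_integral_lborel_on_update_affine) (auto simp: a ua g1_def intro!: sum.cong)
  also have "(\<integral>\<^sup>+w. F (T3 (S w)) \<partial>lborel_on ?I) = (\<integral>\<^sup>+w. F (T3 w) \<partial>lborel_on ?I)"
    unfolding S_def by (rule nn_integral_lborel_on_shear) (auto simp: a)
  also have "\<dots> = ennreal (1 / \<bar>-1 / u a\<bar>) * (\<integral>\<^sup>+w. F w \<partial>lborel_on ?I)"
    unfolding T3_def
    by (rule nn_integral_lborel_on_update_affine) (auto simp: a ua g3_def intro!: sum.cong)
  also have "ennreal (1 / \<bar>u a\<bar>) * (ennreal (1 / \<bar>-1 / u a\<bar>) * (\<integral>\<^sup>+w. F w \<partial>lborel_on ?I))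
      = (\<integral>\<^sup>+w. F w \<partial>lborel_on ?I)"
    using ua by (simp add: mult.assoc[symmetric] ennreal_mult[symmetric] abs_divide)
  finally show ?thesis .
qed

lemma householder_inner:
  "inner_n n v (householder n u z) = inner_n n v z - 2 * (inner_n n u z / inner_n n u u) * inner_n n v u"
proof -
  define c where "c = 2 * (inner_n n u z / inner_n n u u)"
  have "inner_n n v (householder n u z) = (\<Sum>i<n. v i * (z i - c * u i))"
    by (simp add: householder_def inner_n_def c_def)
  also have "\<dots> = inner_n n v z - c * inner_n n v u"
    by (simp add: inner_n_def algebra_simps sum_subtractf sum_distrib_left)
  finally show ?thesis by (simp add: c_def)
qed

lemma householder_norm: "inner_n n (householder n u z) (householder n u z) = inner_n n z z"
proof -
  define c where "c = 2 * (inner_n n u z / inner_n n u u)"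
  have "inner_n n (householder n u z) (householder n u z) = (\<Sum>i<n. (z i - c * u i) * (z i - c * u i))"
    by (simp add: householder_def inner_n_def c_def)
  also have "\<dots> = inner_n n z z - 2 * c * inner_n n u z + c * c * inner_n n u u"
    by (simp add: inner_n_def algebra_simps sum_subtractf sum.distrib sum_distrib_left)
  also have "\<dots> = inner_n n z z"
    by (cases "inner_n n u u = 0") (simp_all add: c_def field_simps)
  finally show ?thesis .
qed

lemma PiM_density_lborel:
  fixes f :: "real \<Rightarrow> real"
  assumes I: "finite I" and f[measurable]: "f \<in> borel_measurable borel"
    and f_nonneg: "\<And>x. 0 \<le> f x" and prob: "prob_space (density lborel f)"
  shows "PiM I (\<lambda>_. density lborel f) = density (lborel_on I) (\<lambda>z. \<Prod>i\<in>I. f (z i))"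
proof -
  interpret prob_space "density lborel f" by (rule prob)
  interpret product_sigma_finite "\<lambda>_. density lborel f" by standard
  interpret L: product_sigma_finite "\<lambda>_. lborel :: real measure" by standard
  show ?thesis
  proof (rule PiM_eqI[symmetric, OF I])
    show "sets (density (lborel_on I) (\<lambda>z. \<Prod>i\<in>I. f (z i))) = sets (PiM I (\<lambda>_. density lborel f))"
      unfolding sets_density by (intro sets_PiM_cong) simp_all
  next
    fix A assume "\<And>i. i \<in> I \<Longrightarrow> A i \<in> sets (density lborel f)"
    then have A[measurable]: "\<And>i. i \<in> I \<Longrightarrow> A i \<in> sets borel" by simp
    have PiE_A: "Pi\<^sub>E I A \<in> sets (lborel_on I)"
      using I by (intro sets_PiM_I_finite) auto
    have ind: "indicator (Pi\<^sub>E I A) z = (\<Prod>i\<in>I. indicator (A i) (z i) :: ennreal)"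
      if "z \<in> space (lborel_on I)" for z
      using that I by (cases "z \<in> Pi\<^sub>E I A")
        (auto simp: indicator_def space_PiM PiE_def intro!: prod.neutral intro: prod_zero)
    have "emeasure (density (lborel_on I) (\<lambda>z. \<Prod>i\<in>I. f (z i))) (Pi\<^sub>E I A)
        = (\<integral>\<^sup>+z. (\<Prod>i\<in>I. ennreal (f (z i)) * indicator (A i) (z i)) \<partial>lborel_on I)"
      using PiE_A I
      by (auto simp: emeasure_density ind prod.distrib prod_ennreal f_nonneg intro!: nn_integral_cong)
    also have "\<dots> = (\<Prod>i\<in>I. \<integral>\<^sup>+x. ennreal (f x) * indicator (A i) x \<partial>lborel)"
      using I by (subst L.product_nn_integral_prod) auto
    also have "\<dots> = (\<Prod>i\<in>I. emeasure (density lborel f) (A i))"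
      by (intro prod.cong refl) (simp add: emeasure_density)
    finally show "emeasure (density (lborel_on I) (\<lambda>z. \<Prod>i\<in>I. f (z i))) (Pi\<^sub>E I A)
        = (\<Prod>i\<in>I. emeasure (density lborel f) (A i))" .
  qed
qed

lemma prod_normal_density:
  "(\<Prod>i<n. normal_density 0 \<sigma> (z i)) = (1 / sqrt (2 * pi * \<sigma>\<^sup>2)) ^ n * exp (- inner_n n z z / (2 * \<sigma>\<^sup>2))"
proof -
  have "(\<Prod>i<n. normal_density 0 \<sigma> (z i)) = (1 / sqrt (2 * pi * \<sigma>\<^sup>2)) ^ n * (\<Prod>i<n. exp (- (z i)\<^sup>2 / (2 * \<sigma>\<^sup>2)))"
    by (simp only: normal_density_def prod.distrib prod_constant diff_zero card_lessThan)
  also have "(\<Prod>i<n. exp (- (z i)\<^sup>2 / (2 * \<sigma>\<^sup>2))) = exp (- inner_n n z z / (2 * \<sigma>\<^sup>2))"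
    by (simp add: exp_sum[symmetric] inner_n_def power2_eq_square sum_divide_distrib sum_negf)
  finally show ?thesis .
qed

lemma gauss_noise_eq_density:
  assumes "\<sigma> > 0"
  shows "gauss_noise n \<sigma>
    = density (lborel_on {..<n}) (\<lambda>z. (1 / sqrt (2 * pi * \<sigma>\<^sup>2)) ^ n * exp (- inner_n n z z / (2 * \<sigma>\<^sup>2)))"
  unfolding gauss_noise_def prod_normal_density[symmetric]
  using assms by (intro PiM_density_lborel) (auto intro: normal_density_nonneg prob_space_normal_density)

lemma prob_space_gauss_noise: "\<sigma> > 0 \<Longrightarrow> prob_space (gauss_noise n \<sigma>)"
  unfolding gauss_noise_def by (intro prob_space_PiM prob_space_normal_density)

lemma sets_gauss_noise[measurable_cong]: "sets (gauss_noise n \<sigma>) = sets (lborel_on {..<n})"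
  unfolding gauss_noise_def by (intro sets_PiM_cong) simp_all

lemma measurable_householder_gauss_noise:
  "householder n u \<in> measurable (gauss_noise n \<sigma>) (gauss_noise n \<sigma>)"
  using measurable_householder by (simp add: measurable_cong_sets[OF sets_gauss_noise sets_gauss_noise])

lemma distr_gauss_noise_householder:
  assumes "\<sigma> > 0"
  shows "distr (gauss_noise n \<sigma>) (gauss_noise n \<sigma>) (householder n u) = gauss_noise n \<sigma>"
proof (rule measure_eqI)
  let ?L = "lborel_on {..<n}"
  define dens where "dens z = ennreal ((1 / sqrt (2 * pi * \<sigma>\<^sup>2)) ^ n * exp (- inner_n n z z / (2 * \<sigma>\<^sup>2)))" for z
  have G: "gauss_noise n \<sigma> = density ?L dens"
    unfolding dens_def by (rule gauss_noise_eq_density[OF assms])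
  have [measurable]: "dens \<in> borel_measurable ?L"
    unfolding dens_def inner_n_def by measurable
  fix A assume "A \<in> sets (distr (gauss_noise n \<sigma>) (gauss_noise n \<sigma>) (householder n u))"
  then have A[measurable]: "A \<in> sets ?L" by (simp add: sets_gauss_noise)
  have "emeasure (distr (gauss_noise n \<sigma>) (gauss_noise n \<sigma>) (householder n u)) A
      = (\<integral>\<^sup>+z. dens z * indicator (householder n u -` A \<inter> space ?L) z \<partial>?L)"
    by (simp add: G emeasure_distr emeasure_density measurable_householder_gauss_noise[of n u \<sigma>, unfolded G])
  also have "\<dots> = (\<integral>\<^sup>+z. dens (householder n u z) * indicator A (householder n u z) \<partial>?L)"
    by (intro nn_integral_cong) (simp add: dens_def householder_norm indicator_def)
  also have "\<dots> = (\<integral>\<^sup>+z. dens z * indicator A z \<partial>?L)"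
    by (rule nn_integral_lborel_on_householder[where F = "\<lambda>z. dens z * indicator A z"]) measurable
  also have "\<dots> = emeasure (gauss_noise n \<sigma>) A"
    by (simp add: G emeasure_density)
  finally show "emeasure (distr (gauss_noise n \<sigma>) (gauss_noise n \<sigma>) (householder n u)) A = emeasure (gauss_noise n \<sigma>) A" .
qed simp

lemma householder_swap:
  assumes v: "inner_n n v v = 1" and w: "inner_n n w w = 1"
  defines "u \<equiv> \<lambda>i. v i - w i"
  shows "inner_n n v (householder n u z) = inner_n n w z"
    and "inner_n n w (householder n u z) = inner_n n v z"
proof -
  have uu: "inner_n n u u = 2 - 2 * inner_n n v w"
    using v w by (simp add: u_def inner_n_diff_left inner_n_diff_right inner_n_commute[of n w v])
  have vu: "inner_n n v u = 1 - inner_n n v w" and wu: "inner_n n w u = inner_n n v w - 1"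
    using v w by (simp_all add: u_def inner_n_diff_right inner_n_commute[of n w v])
  have uz: "inner_n n u z = inner_n n v z - inner_n n w z"
    by (simp add: u_def inner_n_diff_left)
  have "inner_n n v (householder n u z) = inner_n n w z \<and> inner_n n w (householder n u z) = inner_n n v z"
  proof (cases "inner_n n u u = 0")
    case True
    then have "inner_n n u z = 0" unfolding inner_n_self_eq_0_iff by (simp add: inner_n_def)
    then show ?thesis using True by (simp add: householder_inner uu uz)
  next
    case False
    then show ?thesis by (simp add: householder_inner uu vu wu uz field_simps)
  qed
  then show "inner_n n v (householder n u z) = inner_n n w z"
    and "inner_n n w (householder n u z) = inner_n n v z" by simp_all
qed

section \<open>Ridge regression\<close>

definition design_mult :: "nat \<Rightarrow> (nat \<Rightarrow> nat \<Rightarrow> real) \<Rightarrow> (nat \<Rightarrow> real) \<Rightarrow> (nat \<Rightarrow> real)" where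
  "design_mult p D b = (\<lambda>i. \<Sum>k<p. b k * D k i)"

lemma inner_n_design_mult_left:
  "inner_n n (design_mult p D b) v = (\<Sum>k<p. b k * inner_n n (D k) v)"
proof -
  have "inner_n n (design_mult p D b) v = (\<Sum>i<n. \<Sum>k<p. b k * (D k i * v i))"
    by (simp add: design_mult_def inner_n_def sum_distrib_right mult.assoc)
  also have "\<dots> = (\<Sum>k<p. b k * inner_n n (D k) v)"
    by (subst sum.swap) (simp add: inner_n_def sum_distrib_left)
  finally show ?thesis .
qed

lemma inner_n_design_mult_right:
  "inner_n n v (design_mult p D b) = (\<Sum>k<p. b k * inner_n n v (D k))"
  by (simp add: inner_n_commute[of n v] inner_n_design_mult_left)

lemma inner_n_design_mult_self:
  "inner_n n (design_mult p D b) (design_mult p D b) = (\<Sum>k<p. \<Sum>l<p. b k * b l * inner_n n (D k) (D l))"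
  by (simp add: inner_n_design_mult_left inner_n_design_mult_right sum_distrib_left mult.assoc)
    (subst sum.swap, simp add: mult.left_commute)

lemma full_column_rank_iff_gram:
  "full_column_rank n p D \<longleftrightarrow>
     (\<forall>c. (\<Sum>k<p. \<Sum>l<p. c k * c l * inner_n n (D k) (D l)) = 0 \<longrightarrow> (\<forall>k<p. c k = 0))"
  by (simp add: full_column_rank_def inner_n_design_mult_self[symmetric] inner_n_self_eq_0_iff design_mult_def)

lemma full_column_rank_gram_cong:
  assumes "\<And>k l. k < p \<Longrightarrow> l < p \<Longrightarrow> inner_n n (D k) (D l) = inner_n n (D' k) (D' l)"
  shows "full_column_rank n p D \<longleftrightarrow> full_column_rank n p D'"
proof -
  have "(\<Sum>k<p. \<Sum>l<p. c k * c l * inner_n n (D k) (D l)) = (\<Sum>k<p. \<Sum>l<p. c k * c l * inner_n n (D' k) (D' l))"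
    for c by (intro sum.cong) (simp_all add: assms)
  then show ?thesis by (simp add: full_column_rank_iff_gram)
qed

lemma ridge_obj_eq_inner_n:
  "ridge_obj n p lam y D b
     = inner_n n (\<lambda>i. y i - design_mult p D b i) (\<lambda>i. y i - design_mult p D b i) + lam * (\<Sum>k<p. (b k)\<^sup>2)"
  by (simp add: ridge_obj_def design_mult_def inner_n_def power2_eq_square)

lemma ridge_obj_expand:
  "ridge_obj n p lam y D b = inner_n n y y - 2 * (\<Sum>k<p. b k * inner_n n (D k) y)
     + (\<Sum>k<p. \<Sum>l<p. b k * b l * inner_n n (D k) (D l)) + lam * (\<Sum>k<p. (b k)\<^sup>2)"
proof -
  let ?Xb = "design_mult p D b"
  have "inner_n n (\<lambda>i. y i - ?Xb i) (\<lambda>i. y i - ?Xb i) = inner_n n y y - 2 * inner_n n ?Xb y + inner_n n ?Xb ?Xb"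
    by (simp add: inner_n_diff_left inner_n_diff_right inner_n_commute[of n y ?Xb])
  then show ?thesis
    by (simp only: ridge_obj_eq_inner_n inner_n_design_mult_self) (simp add: inner_n_design_mult_left)
qed

lemma ridge_coef_cong:
  assumes gram: "\<And>k l. k < p \<Longrightarrow> l < p \<Longrightarrow> inner_n n (D k) (D l) = inner_n n (D' k) (D' l)"
    and cross: "\<And>k. k < p \<Longrightarrow> inner_n n (D k) y = inner_n n (D' k) y'"
  shows "ridge_coef n p lam y D = ridge_coef n p lam y' D'"
proof -
  have "ridge_obj n p lam y D b = ridge_obj n p lam y' D' b + (inner_n n y y - inner_n n y' y')" for b
  proof -
    have "(\<Sum>k<p. b k * inner_n n (D k) y) = (\<Sum>k<p. b k * inner_n n (D' k) y')"
      by (intro sum.cong) (simp_all add: cross)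
    moreover have "(\<Sum>k<p. \<Sum>l<p. b k * b l * inner_n n (D k) (D l))
        = (\<Sum>k<p. \<Sum>l<p. b k * b l * inner_n n (D' k) (D' l))"
      by (intro sum.cong) (simp_all add: gram)
    ultimately show ?thesis by (simp add: ridge_obj_expand)
  qed
  then show ?thesis by (simp add: ridge_coef_def)
qed

lemma ridge_obj_add:
  "ridge_obj n p lam y D (\<lambda>k. b k + d k) = ridge_obj n p lam y D b + ridge_obj n p lam (\<lambda>_. 0) D d
     - 2 * (\<Sum>k<p. d k * (inner_n n (D k) (\<lambda>i. y i - design_mult p D b i) - lam * b k))"
proof -
  define r where "r i = y i - design_mult p D b i" for i
  let ?Xd = "design_mult p D d"
  have "(\<lambda>i. y i - design_mult p D (\<lambda>k. b k + d k) i) = (\<lambda>i. r i - ?Xd i)"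
    by (simp add: r_def design_mult_def distrib_right sum.distrib fun_eq_iff)
  moreover have "inner_n n (\<lambda>i. r i - ?Xd i) (\<lambda>i. r i - ?Xd i)
      = inner_n n r r - 2 * (\<Sum>k<p. d k * inner_n n (D k) r) + inner_n n ?Xd ?Xd"
    by (simp add: inner_n_diff_left inner_n_diff_right inner_n_commute[of n r ?Xd] inner_n_design_mult_left)
  moreover have "inner_n n (\<lambda>i. 0 - ?Xd i) (\<lambda>i. 0 - ?Xd i) = inner_n n ?Xd ?Xd"
    by (simp add: inner_n_def)
  moreover have "(\<Sum>k<p. (b k + d k)\<^sup>2) = (\<Sum>k<p. (b k)\<^sup>2) + 2 * (\<Sum>k<p. d k * b k) + (\<Sum>k<p. (d k)\<^sup>2)"
    by (simp add: power2_eq_square algebra_simps sum.distrib sum_distrib_left)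
  ultimately show ?thesis
    by (simp add: ridge_obj_eq_inner_n r_def[symmetric] algebra_simps sum_subtractf sum_distrib_left)
qed

lemma ridge_obj_nonneg: "lam \<ge> 0 \<Longrightarrow> 0 \<le> ridge_obj n p lam y D b"
  by (simp add: ridge_obj_def sum_nonneg)

lemma ridge_obj_zero_response:
  "ridge_obj n p lam (\<lambda>_. 0) D d = inner_n n (design_mult p D d) (design_mult p D d) + lam * (\<Sum>k<p. (d k)\<^sup>2)"
  by (simp add: ridge_obj_eq_inner_n inner_n_def)

lemma ridge_obj_zero_response_eq_0:
  assumes "full_column_rank n p D" and "lam \<ge> 0" and "ridge_obj n p lam (\<lambda>_. 0) D d = 0"
  shows "\<forall>k<p. d k = 0"
proof -
  have "0 \<le> inner_n n (design_mult p D d) (design_mult p D d)" and "0 \<le> lam * (\<Sum>k<p. (d k)\<^sup>2)"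
    using assms(2) by (simp_all add: inner_n_def sum_nonneg)
  then have "inner_n n (design_mult p D d) (design_mult p D d) = 0"
    using assms(3) ridge_obj_zero_response[of n p lam D d] by linarith
  then show ?thesis
    using assms(1) by (simp add: full_column_rank_iff_gram inner_n_design_mult_self)
qed

lemma ridge_coef_eqI:
  assumes rank: "full_column_rank n p D" and lam: "lam \<ge> 0"
    and supp: "\<forall>k\<ge>p. b k = 0"
    and normal: "\<And>k. k < p \<Longrightarrow> inner_n n (D k) (design_mult p D b) + lam * b k = inner_n n (D k) y"
  shows "ridge_coef n p lam y D = b"
proof -
  have "inner_n n (D k) (\<lambda>i. y i - design_mult p D b i) - lam * b k = 0" if "k < p" for k
    using normal[OF that] by (simp add: inner_n_diff_right)
  then have split: "ridge_obj n p lam y D b'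
      = ridge_obj n p lam y D b + ridge_obj n p lam (\<lambda>_. 0) D (\<lambda>k. b' k - b k)" for b'
    using ridge_obj_add[of n p lam y D b "\<lambda>k. b' k - b k"] by simp
  have excess_nonneg: "0 \<le> ridge_obj n p lam (\<lambda>_. 0) D (\<lambda>k. b' k - b k)" for b'
    by (rule ridge_obj_nonneg[OF lam])
  have minimal: "ridge_obj n p lam y D b \<le> ridge_obj n p lam y D b'" for b'
    using split[of b'] excess_nonneg[of b'] by linarith
  have unique: "\<forall>k<p. b' k = b k" if "ridge_obj n p lam y D b' \<le> ridge_obj n p lam y D b" for b'
  proof -
    have "ridge_obj n p lam (\<lambda>_. 0) D (\<lambda>k. b' k - b k) = 0"
      using that split[of b'] excess_nonneg[of b'] by linarith
    then show ?thesis using ridge_obj_zero_response_eq_0[OF rank lam] by fastforce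
  qed
  show ?thesis
    unfolding ridge_coef_def
  proof (rule the_equality)
    show "(\<forall>k\<ge>p. b k = 0) \<and> (\<forall>b'. (\<forall>k\<ge>p. b' k = 0) \<longrightarrow> ridge_obj n p lam y D b \<le> ridge_obj n p lam y D b')"
      using supp minimal by blast
  next
    fix b' assume "(\<forall>k\<ge>p. b' k = 0) \<and> (\<forall>b''. (\<forall>k\<ge>p. b'' k = 0) \<longrightarrow> ridge_obj n p lam y D b' \<le> ridge_obj n p lam y D b'')"
    then show "b' = b"
      using supp unique[of b'] by (metis ext not_less)
  qed
qed

definition ridge_matrix :: "nat \<Rightarrow> nat \<Rightarrow> real \<Rightarrow> (nat \<Rightarrow> nat \<Rightarrow> real) \<Rightarrow> real mat" where
  "ridge_matrix n p lam D = mat p p (\<lambda>(k, l). inner_n n (D k) (D l) + (if k = l then lam else 0))"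

lemma ridge_matrix_carrier: "ridge_matrix n p lam D \<in> carrier_mat p p"
  by (simp add: ridge_matrix_def)

lemma ridge_matrix_mult_vec:
  assumes "k < p" and "v \<in> carrier_vec p"
  shows "(ridge_matrix n p lam D *\<^sub>v v) $ k = inner_n n (D k) (design_mult p D (\<lambda>l. v $ l)) + lam * v $ k"
proof -
  have "(ridge_matrix n p lam D *\<^sub>v v) $ k
      = (\<Sum>l<p. v $ l * (inner_n n (D k) (D l) + (if k = l then lam else 0)))"
    using assms by (auto simp: ridge_matrix_def scalar_prod_def atLeast0LessThan intro!: sum.cong)
  also have "\<dots> = inner_n n (D k) (design_mult p D (\<lambda>l. v $ l)) + lam * v $ k"
    using assms(1) by (simp add: inner_n_design_mult_right distrib_left sum.distrib
        if_distrib[of "\<lambda>c. _ * c"] mult.commute cong: if_cong)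
  finally show ?thesis .
qed

lemma ridge_matrix_invertible:
  assumes rank: "full_column_rank n p D" and lam: "lam \<ge> 0"
  obtains B where "B \<in> carrier_mat p p" and "ridge_matrix n p lam D * B = 1\<^sub>m p"
proof -
  have "v = 0\<^sub>v p" if v: "v \<in> carrier_vec p" and Av: "ridge_matrix n p lam D *\<^sub>v v = 0\<^sub>v p" for v
  proof -
    define d where "d l = v $ l" for l
    have "(\<Sum>k<p. d k * (ridge_matrix n p lam D *\<^sub>v v) $ k) = ridge_obj n p lam (\<lambda>_. 0) D d"
      using v by (simp add: ridge_matrix_mult_vec d_def[symmetric] ridge_obj_zero_response
          inner_n_design_mult_left distrib_left sum.distrib sum_distrib_left power2_eq_square mult.left_commute)
    then have "ridge_obj n p lam (\<lambda>_. 0) D d = 0" using Av by simp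
    then have "\<forall>k<p. d k = 0" by (rule ridge_obj_zero_response_eq_0[OF rank lam])
    then show ?thesis
      using v by (auto simp: d_def intro!: eq_vecI)
  qed
  moreover have A: "ridge_matrix n p lam D \<in> carrier_mat p p" by (rule ridge_matrix_carrier)
  ultimately have "det (ridge_matrix n p lam D) \<noteq> 0"
    using det_0_iff_vec_prod_zero[OF A] by auto
  then show ?thesis
    using that det_non_zero_imp_unit[OF A, of undefined] by (auto simp: Units_def ring_mat_def)
qed

lemma ridge_coef_closed_form:
  assumes rank: "full_column_rank n p D" and lam: "lam \<ge> 0"
  obtains B :: "nat \<Rightarrow> nat \<Rightarrow> real"
  where "\<And>y k. k < p \<Longrightarrow> ridge_coef n p lam y D k = (\<Sum>l<p. B k l * inner_n n (D l) y)"
proof -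
  obtain B where B: "B \<in> carrier_mat p p" and AB: "ridge_matrix n p lam D * B = 1\<^sub>m p"
    using ridge_matrix_invertible[OF rank lam] .
  show ?thesis
  proof
    fix y k assume k: "k < p"
    define c where "c = vec p (\<lambda>l. inner_n n (D l) y)"
    define b where "b l = (if l < p then (B *\<^sub>v c) $ l else 0)" for l
    have Bc: "B *\<^sub>v c \<in> carrier_vec p" using B by (simp add: c_def)
    have "ridge_matrix n p lam D *\<^sub>v (B *\<^sub>v c) = c"
      using ridge_matrix_carrier[of n p lam D] B AB by (simp add: c_def assoc_mult_mat_vec[symmetric])
    moreover have "design_mult p D b = design_mult p D (\<lambda>l. (B *\<^sub>v c) $ l)"
      by (simp add: design_mult_def b_def)
    ultimately have "inner_n n (D l) (design_mult p D b) + lam * b l = inner_n n (D l) y" if "l < p" for l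
      using ridge_matrix_mult_vec[OF that Bc, where n = n and lam = lam and D = D] that
      by (simp add: b_def c_def)
    then have "ridge_coef n p lam y D = b"
      by (intro ridge_coef_eqI[OF rank lam]) (simp_all add: b_def)
    then show "ridge_coef n p lam y D k = (\<Sum>l<p. B $$ (k, l) * inner_n n (D l) y)"
      using k B by (simp add: b_def c_def scalar_prod_def atLeast0LessThan row_def)
  qed
qed

section \<open>Ranks of exchangeable random variables\<close>

lemma bij_betw_card_greater:
  fixes f :: "'a \<Rightarrow> 'b::linorder"
  assumes S: "finite S" and inj: "inj_on f S"
  shows "bij_betw (\<lambda>m. card {l\<in>S. f m < f l}) S {..<card S}"
proof -
  let ?R = "\<lambda>m. card {l\<in>S. f m < f l}"
  have less: "?R m' < ?R m" if "m' \<in> S" "f m < f m'" for m m'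
  proof -
    have "{l\<in>S. f m' < f l} \<subset> {l\<in>S. f m < f l}" using that by auto
    then show ?thesis using S by (intro psubset_card_mono) auto
  qed
  have inj_R: "inj_on ?R S"
  proof (rule inj_onI)
    fix m m' assume m: "m \<in> S" "m' \<in> S" and eq: "?R m = ?R m'"
    show "m = m'"
    proof (rule ccontr)
      assume "m \<noteq> m'"
      then have "f m \<noteq> f m'" using inj m by (auto dest: inj_onD)
      then have "f m < f m' \<or> f m' < f m" by (simp add: linorder_neq_iff)
      then show False using less[of m' m] less[of m m'] m eq by auto
    qed
  qed
  have sub: "?R ` S \<subseteq> {..<card S}"
  proof
    fix k assume "k \<in> ?R ` S"
    then obtain m where m: "m \<in> S" "k = ?R m" by auto
    have "{l\<in>S. f m < f l} \<subseteq> S - {m}" by auto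
    then have "k \<le> card (S - {m})" using S m(2) by (metis card_mono finite_Diff)
    also have "\<dots> < card S" using m S by (intro card_Diff1_less)
    finally show "k \<in> {..<card S}" by simp
  qed
  have "card (?R ` S) = card {..<card S}" using card_image[OF inj_R] by simp
  then have "?R ` S = {..<card S}" by (rule card_subset_eq[OF finite_lessThan sub])
  with inj_R show ?thesis by (simp add: bij_betw_def)
qed

lemma card_rank_eq_1:
  fixes f :: "'a \<Rightarrow> 'b::linorder"
  assumes S: "finite S" and inj: "inj_on f S" and r: "r < card S"
  shows "card {m\<in>S. card {l\<in>S. l \<noteq> m \<and> f m \<le> f l} = r} = 1"
proof -
  have rank: "{l\<in>S. l \<noteq> m \<and> f m \<le> f l} = {l\<in>S. f m < f l}" if "m \<in> S" for m
    using that by (auto simp: le_less inj_on_eq_iff[OF inj])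
  have bij: "bij_betw (\<lambda>m. card {l\<in>S. f m < f l}) S {..<card S}"
    by (rule bij_betw_card_greater[OF S inj])
  then have "r \<in> (\<lambda>m. card {l\<in>S. f m < f l}) ` S" using r by (simp add: bij_betw_def)
  then obtain m0 where m0: "m0 \<in> S" "card {l\<in>S. f m0 < f l} = r" by blast
  have "{m\<in>S. card {l\<in>S. l \<noteq> m \<and> f m \<le> f l} = r} = {m0}"
    using m0 bij rank by (auto simp: bij_betw_def dest: inj_onD)
  then show ?thesis by simp
qed

lemma card_rank_permute:
  fixes f g :: "'a \<Rightarrow> 'b::linorder"
  assumes \<tau>: "bij_betw \<tau> S S" and a: "a \<in> S" and \<tau>a: "\<tau> a = m" and g: "\<And>l. l \<in> S \<Longrightarrow> g l = f (\<tau> l)"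
  shows "card {l\<in>S. l \<noteq> a \<and> g a \<le> g l} = card {l\<in>S. l \<noteq> m \<and> f m \<le> f l}"
proof -
  define A where "A = {l\<in>S. l \<noteq> m \<and> f m \<le> f l}"
  have "{l\<in>S. l \<noteq> a \<and> g a \<le> g l} = \<tau> -` A \<inter> S"
    using \<tau> a \<tau>a g by (auto simp: A_def bij_betw_def inj_on_eq_iff)
  moreover have "A \<subseteq> \<tau> ` S" using \<tau> by (auto simp: A_def bij_betw_def)
  then have "\<tau> ` (\<tau> -` A \<inter> S) = A" by auto
  moreover have "inj_on \<tau> (\<tau> -` A \<inter> S)"
    using \<tau> by (auto simp: bij_betw_def intro: inj_on_subset)
  ultimately show ?thesis
    unfolding A_def[symmetric] by (metis card_image)
qed

lemma sum_measure_eq_1_if_AE_unique: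
  assumes "prob_space P" and S: "finite S" and E[measurable]: "\<And>m. m \<in> S \<Longrightarrow> E m \<in> sets P"
    and unique: "AE z in P. card {m\<in>S. z \<in> E m} = 1"
  shows "(\<Sum>m\<in>S. measure P (E m)) = 1"
proof -
  interpret prob_space P by fact
  have "(\<Sum>m\<in>S. indicator (E m) z :: real) = card {m\<in>S. z \<in> E m}" for z
    using S by (simp add: indicator_def sum.inter_filter[symmetric] Int_def)
  then have "AE z in P. (\<Sum>m\<in>S. indicator (E m) z) = (1::real)"
    using unique by simp
  then have "integral\<^sup>L P (\<lambda>z. \<Sum>m\<in>S. indicator (E m) z) = integral\<^sup>L P (\<lambda>_. 1 :: real)"
    by (intro integral_cong_AE) auto
  moreover have "integrable P (indicator (E m) :: _ \<Rightarrow> real)" if "m \<in> S" for m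
    using E[OF that] by (simp add: less_top[symmetric])
  moreover have "E m \<inter> space P = E m" if "m \<in> S" for m
    using E[OF that] by (rule sets.Int_space_eq2)
  ultimately show ?thesis
    by (simp add: integral_sum prob_space)
qed

lemma measurable_card_rank:
  fixes f :: "nat \<Rightarrow> 'a \<Rightarrow> real"
  assumes "m \<in> S" and [measurable]: "\<And>l. l \<in> S \<Longrightarrow> f l \<in> borel_measurable P"
  shows "(\<lambda>z. card {l\<in>S. l \<noteq> m \<and> f m z \<le> f l z}) \<in> measurable P (count_space UNIV)"
proof (rule measurable_card)
  fix l
  show "{z \<in> space P. l \<in> {l\<in>S. l \<noteq> m \<and> f m z \<le> f l z}} \<in> sets P"
    using assms(1) by (cases "l \<in> S") auto
qed

lemma prob_rank_uniform:
  fixes f :: "nat \<Rightarrow> 'a \<Rightarrow> real" and P :: "'a measure"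
  assumes "prob_space P" and S: "finite S" "a \<in> S"
    and f[measurable]: "\<And>m. m \<in> S \<Longrightarrow> f m \<in> borel_measurable P"
    and no_ties: "AE z in P. inj_on (\<lambda>m. f m z) S"
    and exchangeable: "\<And>m. m \<in> S \<Longrightarrow> \<exists>Q\<in>measurable P P. \<exists>\<tau>. distr P P Q = P \<and>
          bij_betw \<tau> S S \<and> \<tau> a = m \<and> (\<forall>z\<in>space P. \<forall>l\<in>S. f l (Q z) = f (\<tau> l) z)"
    and r: "r < card S"
  shows "measure P {z \<in> space P. card {l\<in>S. l \<noteq> a \<and> f a z \<le> f l z} = r} = 1 / card S"
proof -
  interpret prob_space P by fact
  define rank where "rank m z = card {l\<in>S. l \<noteq> m \<and> f m z \<le> f l z}" for m z
  define E where "E m = {z \<in> space P. rank m z = r}" for m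
  have E_sets: "E m \<in> sets P" if "m \<in> S" for m
  proof -
    have [measurable]: "rank m \<in> measurable P (count_space UNIV)"
      unfolding rank_def[abs_def] using that f by (rule measurable_card_rank)
    show ?thesis unfolding E_def by measurable
  qed
  have E_eq: "measure P (E m) = measure P (E a)" if m: "m \<in> S" for m
  proof -
    obtain Q \<tau> where Q: "Q \<in> measurable P P" "distr P P Q = P"
      and \<tau>: "bij_betw \<tau> S S" "\<tau> a = m"
      and permute: "\<And>z l. z \<in> space P \<Longrightarrow> l \<in> S \<Longrightarrow> f l (Q z) = f (\<tau> l) z"
      using exchangeable[OF m] by blast
    have "rank a (Q z) = rank m z" if "z \<in> space P" for z
      unfolding rank_def
      by (rule card_rank_permute[where g = "\<lambda>l. f l (Q z)" and f = "\<lambda>l. f l z", OF \<tau>(1) S(2) \<tau>(2)])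
        (rule permute[OF that])
    then have "Q -` E a \<inter> space P = E m"
      using measurable_space[OF Q(1)] by (auto simp: E_def)
    then show ?thesis
      using measure_distr[OF Q(1) E_sets[OF S(2)]] Q(2) by simp
  qed
  have unique: "AE z in P. card {m\<in>S. z \<in> E m} = 1"
    using no_ties AE_space
  proof eventually_elim
    case (elim z)
    then have "{m\<in>S. z \<in> E m} = {m\<in>S. rank m z = r}" by (auto simp: E_def)
    then show ?case
      unfolding rank_def using card_rank_eq_1[OF S(1) elim(1) r] by simp
  qed
  have "(\<Sum>m\<in>S. measure P (E m)) = 1"
    using assms(1) S(1) E_sets unique by (rule sum_measure_eq_1_if_AE_unique)
  also have "(\<Sum>m\<in>S. measure P (E m)) = card S * measure P (E a)"
    by (simp add: E_eq)
  finally show ?thesis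
    using r by (simp add: E_def rank_def eq_divide_eq mult.commute)
qed

section \<open>Substitute columns\<close>

lemma inner_n_response:
  "inner_n n v (response p x \<beta> z) = inner_n n v (design_mult p x \<beta>) + inner_n n v z"
  by (simp add: response_def design_mult_def inner_n_def distrib_left sum.distrib)

lemma measurable_inner_n_response:
  "(\<lambda>z. inner_n n v (response p x \<beta> z)) \<in> borel_measurable (gauss_noise n \<sigma>)"
proof -
  have "(\<lambda>z. inner_n n v z) \<in> borel_measurable (lborel_on {..<n})"
    unfolding inner_n_def by measurable
  then show ?thesis
    by (simp add: inner_n_response measurable_cong_sets[OF sets_gauss_noise refl])
qed

locale substitute_columns =
  fixes n p M :: nat and lam s :: real
    and x :: "nat \<Rightarrow> nat \<Rightarrow> real" and xt :: "nat \<Rightarrow> nat \<Rightarrow> nat \<Rightarrow> real" and j :: nat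
  assumes rank: "full_column_rank n p x"
    and unit: "\<forall>k<p. inner_n n (x k) (x k) = 1"
    and lam_nonneg: "lam \<ge> 0"
    and j_lt: "j < p"
    and xt_other: "\<forall>m\<in>{1..M}. \<forall>i<p. i \<noteq> j \<longrightarrow> inner_n n (x i) (xt j m) = inner_n n (x i) (x j)"
    and xt_self: "\<forall>m\<in>{1..M}. inner_n n (x j) (xt j m) = 1 - s"
    and xt_norm: "\<forall>m\<in>{1..M}. inner_n n (xt j m) (xt j m) = 1"
    and xt_pair: "\<forall>m\<in>{1..M}. \<forall>l\<in>{1..M}. l \<noteq> m \<longrightarrow> inner_n n (xt j m) (xt j l) = 1 - s"
begin

definition candidate :: "nat \<Rightarrow> nat \<Rightarrow> real" where
  "candidate m = (if m = 0 then x j else xt j m)"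

lemma bhat_eq_ridge_coef:
  "bhat n p lam x xt \<beta> j m z = ridge_coef n p lam (response p x \<beta> z) (x(j := candidate m)) j"
  by (simp add: bhat_def candidate_def)

lemma inner_candidate_self: "m \<in> {0..M} \<Longrightarrow> inner_n n (candidate m) (candidate m) = 1"
  using unit xt_norm j_lt by (simp add: candidate_def)

lemma inner_column_candidate:
  "m \<in> {0..M} \<Longrightarrow> i < p \<Longrightarrow> i \<noteq> j \<Longrightarrow> inner_n n (x i) (candidate m) = inner_n n (x i) (x j)"
  using xt_other by (simp add: candidate_def)

lemma inner_candidate_pair:
  assumes "m \<in> {0..M}" "l \<in> {0..M}" "m \<noteq> l"
  shows "inner_n n (candidate m) (candidate l) = 1 - s"
  using assms xt_self xt_pair by (auto simp: candidate_def inner_n_commute[of n "xt j m" "x j" for m])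

lemma gram_design:
  assumes "m \<in> {0..M}" "k < p" "l < p"
  shows "inner_n n ((x(j := candidate m)) k) ((x(j := candidate m)) l) = inner_n n (x k) (x l)"
proof (cases "k = j"; cases "l = j")
  assume "k = j" "l \<noteq> j"
  then show ?thesis
    using assms inner_column_candidate[OF assms(1), of l] by (simp add: inner_n_commute)
next
  assume "k \<noteq> j" "l = j"
  then show ?thesis
    using assms inner_column_candidate[OF assms(1), of k] by simp
qed (use assms inner_candidate_self unit j_lt in simp_all)

lemma measurable_bhat:
  assumes "m \<in> {0..M}"
  shows "(\<lambda>z. bhat n p lam x xt \<beta> j m z) \<in> borel_measurable (gauss_noise n \<sigma>)"
proof -
  have "full_column_rank n p (x(j := candidate m))"
    using rank full_column_rank_gram_cong[of p n "x(j := candidate m)" x] gram_design[OF assms] by simp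
  then obtain B where "\<And>y. ridge_coef n p lam y (x(j := candidate m)) j
      = (\<Sum>l<p. B j l * inner_n n ((x(j := candidate m)) l) y)"
    using ridge_coef_closed_form lam_nonneg j_lt by metis
  then have "(\<lambda>z. bhat n p lam x xt \<beta> j m z)
      = (\<lambda>z. \<Sum>l<p. B j l * inner_n n ((x(j := candidate m)) l) (response p x \<beta> z))"
    by (simp add: bhat_eq_ridge_coef)
  then show ?thesis
    by (simp only:) (intro borel_measurable_sum borel_measurable_times borel_measurable_const
        measurable_inner_n_response)
qed

lemma inner_candidate_design_mult:
  assumes "\<beta> j = 0" and "m \<in> {0..M}"
  shows "inner_n n (candidate m) (design_mult p x \<beta>) = inner_n n (x j) (design_mult p x \<beta>)"
  unfolding inner_n_design_mult_right
proof (intro sum.cong refl)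
  fix k assume "k \<in> {..<p}"
  then show "\<beta> k * inner_n n (candidate m) (x k) = \<beta> k * inner_n n (x j) (x k)"
    using assms inner_column_candidate[OF assms(2), of k] by (cases "k = j") (simp_all add: inner_n_commute)
qed

lemma inner_column_householder:
  assumes "m \<in> {0..M}" and "k < p" and "k \<noteq> j"
  shows "inner_n n (x k) (householder n (\<lambda>i. candidate 0 i - candidate m i) z) = inner_n n (x k) z"
  using inner_column_candidate[OF _ assms(2,3)] assms(1) by (simp add: householder_inner inner_n_diff_right)

lemma inner_candidate_householder:
  assumes m: "m \<in> {0..M}" and l: "l \<in> {0..M}"
  shows "inner_n n (candidate l) (householder n (\<lambda>i. candidate 0 i - candidate m i) z)
    = inner_n n (candidate (Transposition.transpose 0 m l)) z"
proof -
  have unit0: "inner_n n (candidate 0) (candidate 0) = 1" and unitm: "inner_n n (candidate m) (candidate m) = 1"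
    using m by (simp_all add: inner_candidate_self)
  consider "l = 0" | "l = m" | "l \<noteq> 0" "l \<noteq> m" by blast
  then show ?thesis
  proof cases
    case 1
    then show ?thesis using householder_swap(1)[OF unit0 unitm] by simp
  next
    case 2
    then show ?thesis using householder_swap(2)[OF unit0 unitm] by simp
  next
    case 3
    then have "inner_n n (candidate l) (\<lambda>i. candidate 0 i - candidate m i) = 0"
      using m l by (simp add: inner_n_diff_right inner_candidate_pair)
    then show ?thesis using 3 by (simp add: householder_inner)
  qed
qed

lemma bhat_householder:
  assumes null: "\<beta> j = 0" and m: "m \<in> {0..M}" and l: "l \<in> {0..M}"
  shows "bhat n p lam x xt \<beta> j l (householder n (\<lambda>i. candidate 0 i - candidate m i) z)
    = bhat n p lam x xt \<beta> j (Transposition.transpose 0 m l) z"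
proof -
  let ?\<tau>l = "Transposition.transpose 0 m l"
  have \<tau>l: "?\<tau>l \<in> {0..M}" using m l by (auto simp: Transposition.transpose_def)
  have "ridge_coef n p lam (response p x \<beta> (householder n (\<lambda>i. candidate 0 i - candidate m i) z)) (x(j := candidate l))
      = ridge_coef n p lam (response p x \<beta> z) (x(j := candidate ?\<tau>l))"
  proof (rule ridge_coef_cong)
    fix k k' assume "k < p" "k' < p"
    then show "inner_n n ((x(j := candidate l)) k) ((x(j := candidate l)) k')
        = inner_n n ((x(j := candidate ?\<tau>l)) k) ((x(j := candidate ?\<tau>l)) k')"
      by (simp only: gram_design[OF l] gram_design[OF \<tau>l])
  next
    fix k assume k: "k < p"
    show "inner_n n ((x(j := candidate l)) k) (response p x \<beta> (householder n (\<lambda>i. candidate 0 i - candidate m i) z))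
        = inner_n n ((x(j := candidate ?\<tau>l)) k) (response p x \<beta> z)"
      using k m l \<tau>l inner_column_householder[OF m k]
      by (cases "k = j") (simp_all add: inner_n_response inner_candidate_design_mult[where \<beta> = \<beta>, OF null]
          inner_candidate_householder)
  qed
  then show ?thesis by (simp add: bhat_eq_ridge_coef)
qed

lemma abs_bhat_exchangeable:
  assumes \<sigma>: "\<sigma> > 0" and null: "\<beta> j = 0" and m: "m \<in> {0..M}"
  shows "\<exists>Q\<in>measurable (gauss_noise n \<sigma>) (gauss_noise n \<sigma>). \<exists>\<tau>.
    distr (gauss_noise n \<sigma>) (gauss_noise n \<sigma>) Q = gauss_noise n \<sigma> \<and> bij_betw \<tau> {0..M} {0..M} \<and> \<tau> 0 = m \<and>
    (\<forall>z\<in>space (gauss_noise n \<sigma>). \<forall>l\<in>{0..M}.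
      \<bar>bhat n p lam x xt \<beta> j l (Q z)\<bar> = \<bar>bhat n p lam x xt \<beta> j (\<tau> l) z\<bar>)"
proof (intro bexI[of _ "householder n (\<lambda>i. candidate 0 i - candidate m i)"]
    exI[of _ "Transposition.transpose 0 m"] conjI ballI)
  fix z l assume "l \<in> {0..M}"
  then show "\<bar>bhat n p lam x xt \<beta> j l (householder n (\<lambda>i. candidate 0 i - candidate m i) z)\<bar>
      = \<bar>bhat n p lam x xt \<beta> j (Transposition.transpose 0 m l) z\<bar>"
    by (simp only: bhat_householder[where \<beta> = \<beta>, OF null m])
next
  show "distr (gauss_noise n \<sigma>) (gauss_noise n \<sigma>) (householder n (\<lambda>i. candidate 0 i - candidate m i))
      = gauss_noise n \<sigma>"
    by (rule distr_gauss_noise_householder[OF \<sigma>])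
next
  show "householder n (\<lambda>i. candidate 0 i - candidate m i) \<in> measurable (gauss_noise n \<sigma>) (gauss_noise n \<sigma>)"
    by (rule measurable_householder_gauss_noise)
qed (use m in simp_all)

end

lemma pval_eq_iff_rank:
  assumes "k \<ge> 1"
  shows "pval n p lam x xt \<beta> M j z = real k / (real M + 1) \<longleftrightarrow>
    card {l\<in>{0..M}. l \<noteq> 0 \<and> \<bar>bhat n p lam x xt \<beta> j 0 z\<bar> \<le> \<bar>bhat n p lam x xt \<beta> j l z\<bar>} = k - 1"
    (is "_ \<longleftrightarrow> card ?R = k - 1")
proof -
  have "m \<in> {1..M} \<longleftrightarrow> m \<in> {0..M} \<and> m \<noteq> 0" for m :: nat by auto
  then have "{m \<in> {1..M}. \<bar>bhat n p lam x xt \<beta> j m z\<bar> \<ge> \<bar>bhat n p lam x xt \<beta> j 0 z\<bar>} = ?R"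
    by (simp only: conj_assoc)
  then have "pval n p lam x xt \<beta> M j z = (1 + real (card ?R)) / (real M + 1)"
    by (simp add: pval_def)
  moreover have "real M + 1 \<noteq> 0" by linarith
  moreover have "1 + real (card ?R) = real k \<longleftrightarrow> card ?R = k - 1"
    using assms by linarith
  ultimately show ?thesis by (simp add: divide_cancel_right)
qed

theorem lemma2p2:
  fixes n p M :: nat and \<sigma> lam :: real
    and x :: "nat \<Rightarrow> nat \<Rightarrow> real"          (* column k of X is x k *)
    and xt :: "nat \<Rightarrow> nat \<Rightarrow> nat \<Rightarrow> real"    (* xt j m = m-th substitute vector for x_j *)
    and \<beta> s :: "nat \<Rightarrow> real"
    and j :: nat
  assumes sigma_pos: "\<sigma> > 0"
    and rank: "full_column_rank n p x"
    and unit: "\<forall>k<p. inner_n n (x k) (x k) = 1"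
    and M_ge: "M \<ge> 1"
    and lam_nonneg: "lam \<ge> 0"
    and xt_other: "\<forall>jj<p. \<forall>m\<in>{1..M}. \<forall>i<p. i \<noteq> jj \<longrightarrow>
                     inner_n n (x i) (xt jj m) = inner_n n (x i) (x jj)"
    and xt_self: "\<forall>jj<p. \<forall>m\<in>{1..M}. inner_n n (x jj) (xt jj m) = 1 - s jj"
    and xt_norm: "\<forall>jj<p. \<forall>m\<in>{1..M}. inner_n n (xt jj m) (xt jj m) = 1"
    and xt_pair: "\<forall>jj<p. \<forall>m\<in>{1..M}. \<forall>l\<in>{1..M}. l \<noteq> m \<longrightarrow>
                     inner_n n (xt jj m) (xt jj l) = 1 - s jj"
    and no_ties: "\<forall>jj<p. AE z in gauss_noise n \<sigma>.
                     \<forall>m\<in>{0..M}. \<forall>l\<in>{0..M}. m \<noteq> l \<longrightarrow>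
                       \<bar>bhat n p lam x xt \<beta> jj m z\<bar> \<noteq> \<bar>bhat n p lam x xt \<beta> jj l z\<bar>"
    and j_lt: "j < p"
    and null: "\<beta> j = 0"
  shows "\<forall>k\<in>{1..M+1}.
           measure (gauss_noise n \<sigma>)
             {z \<in> space (gauss_noise n \<sigma>). pval n p lam x xt \<beta> M j z = real k / (real M + 1)}
           = 1 / (real M + 1)"
proof (intro ballI)
  fix k assume k: "k \<in> {1..M+1}"
  interpret substitute_columns n p M lam "s j" x xt j
    using rank unit lam_nonneg j_lt xt_other xt_self xt_norm xt_pair by unfold_locales auto
  let ?G = "gauss_noise n \<sigma>"
  let ?f = "\<lambda>m z. \<bar>bhat n p lam x xt \<beta> j m z\<bar>"
  have "AE z in ?G. \<forall>m\<in>{0..M}. \<forall>l\<in>{0..M}. m \<noteq> l \<longrightarrow> ?f m z \<noteq> ?f l z"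
    using no_ties j_lt by blast
  then have "AE z in ?G. inj_on (\<lambda>m. ?f m z) {0..M}"
    by eventually_elim (blast intro: inj_onI)
  then have "measure ?G {z \<in> space ?G. card {l\<in>{0..M}. l \<noteq> 0 \<and> ?f 0 z \<le> ?f l z} = k - 1}
      = 1 / card {0..M}"
    using k measurable_bhat
    by (intro prob_rank_uniform prob_space_gauss_noise sigma_pos borel_measurable_abs
        abs_bhat_exchangeable[where \<beta> = \<beta>, OF sigma_pos null]) auto
  moreover have "real (card {0..M}) = real M + 1" by simp
  moreover have "k \<ge> 1" using k by simp
  ultimately show "measure ?G {z \<in> space ?G. pval n p lam x xt \<beta> M j z = real k / (real M + 1)}
      = 1 / (real M + 1)"
    by (simp only: pval_eq_iff_rank)
qed

end
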